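(* Let $K$ be a field, $\Lambda=(KQ/\langle I\rangle,|\cdot|)$ a graded pinched gentle algebra, $(\alpha,\beta)$ an acyclic graded Kronecker of $\Lambda$ with source $1$ and target $2$, $\mu\in K^*$, and $B=(P_2[|\alpha|]\oplus P_1[1],\partial=\begin{pmatrix}0&\alpha+\mu\beta\\0&0\end{pmatrix})\in\mathcal{P}(\Lambda)^{pre-tr}$. Then $H^*\mathrm{End}_{\mathcal{P}(\Lambda)^{pre-tr}}(B)\simeq K[x]/(x^2)$, where $x$ is of degree $1$.
   Context: Paths in $Q$ are composed right to left; $e_a$ trivial path, $P_a=e_a\Lambda$. Graded pinched gentle: $Q_1=Q_1^g\sqcup Q_1^p$, $I=I^g\sqcup I^p$, $(Q^g,\langle I^g\rangle)$ gentle (each vertex at most two incoming/outgoing arrows; $I^g$ paths of length two with, for each arrow $\alpha$, at most one arrow $\beta$ with $\alpha\beta$ a path in $I^g$, at most one $\gamma$ with $\gamma\alpha$ in $I^g$, at most one $\beta'$ with $\alpha\beta'$ a path not in $I^g$, at most one $\gamma'$ with $\gamma'\alpha$ not in $I^g$), $Q_1^p$ degree-zero loops at distinct vertices, and for each $v$ with loop $\gamma_v$, arrows $\alpha_v^\pm,\beta_v^\pm$ of $Q^g$ at $v$ with $\beta_v^+\alpha_v^-,\alpha_v^+\beta_v^-\in I^g$ give $I^p=\{\beta_v^+(\gamma_v+e_v),(\gamma_v+e_v)\beta_v^-,\alpha_v^+(\gamma_v-e_v),(\gamma_v-e_v)\alpha_v^-\}$. Graded Kronecker: arrows $\alpha,\beta$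 of $Q^g$, not loops, common source $1$, common target $2$, $|\alpha|=|\beta|$, no loop of $Q_1^p$ at $1$ or $2$; acyclic: $\alpha,\beta$ not on an oriented cycle of $(Q^g,I^g)$. $\mathcal{P}(\Lambda)$ is the DG category with objects $Q_0$ (vertex $i$ written $P_i$), $\mathrm{Hom}(i,j)=e_j\Lambda e_i$ graded, zero differential. $\mathcal{P}(\Lambda)^{pre-tr}$ (one-sided twisted complexes): objects $(\bigoplus_iC_i[r_i],\partial)$ with $\partial$ strictly upper triangular, entries $\partial_{ij}\in\mathrm{Hom}(C_j,C_i)$ of degree $r_i-r_j+1$, $d_{naive}\partial+\partial^2=0$; morphisms are matrices of morphisms, an entry $b:C_l\to C'_k$ having degree $|b|+r_l-r'_k$; composition by matrix multiplication; $df=d_{naive}f+\partial'f-(-1)^lf\partial$ for $f$ of degree $l$. *)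

theory Defs
  imports Main
begin

record ('v,'a) gquiver =
  qV :: "'v set"
  qA :: "'a set"
  qs :: "'a \<Rightarrow> 'v"
  qt :: "'a \<Rightarrow> 'v"
  qdeg :: "'a \<Rightarrow> int"

text \<open>A path is a pair (source vertex, list of arrows). Paths are composed right to
left: the list [a_n, ..., a_1] is the path a_n ... a_1 (a_1 is traversed first).
The empty list at vertex v is the trivial path e_v.\<close>
type_synonym ('v,'a) path = "'v \<times> 'a list"

definition valid_path :: "('v,'a,'c) gquiver_scheme \<Rightarrow> ('v,'a) path \<Rightarrow> bool" where
  "valid_path Q p \<longleftrightarrow> fst p \<in> qV Q \<and> set (snd p) \<subseteq> qA Q \<and>
     (snd p \<noteq> [] \<longrightarrow> qs Q (last (snd p)) = fst p) \<and>
     (\<forall>i. Suc i < length (snd p) \<longrightarrow> qs Q (snd p ! i) = qt Q (snd p ! Suc i))"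

definition psrc :: "('v,'a) path \<Rightarrow> 'v" where
  "psrc p = fst p"

definition ptgt :: "('v,'a,'c) gquiver_scheme \<Rightarrow> ('v,'a) path \<Rightarrow> 'v" where
  "ptgt Q p = (if snd p = [] then fst p else qt Q (hd (snd p)))"

definition pdeg :: "('v,'a,'c) gquiver_scheme \<Rightarrow> ('v,'a) path \<Rightarrow> int" where
  "pdeg Q p = sum_list (map (qdeg Q) (snd p))"

text \<open>Elements of KQ: finitely supported K-valued functions on valid paths.\<close>
type_synonym ('v,'a,'k) kq = "('v,'a) path \<Rightarrow> 'k"

definition in_KQ :: "('v,'a,'c) gquiver_scheme \<Rightarrow> ('v,'a,'k::zero) kq \<Rightarrow> bool" where
  "in_KQ Q f \<longleftrightarrow> finite {p. f p \<noteq> 0} \<and> (\<forall>p. f p \<noteq> 0 \<longrightarrow> valid_path Q p)"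

definition kq_zero :: "('v,'a,'k::zero) kq" where
  "kq_zero = (\<lambda>p. 0)"

definition kq_add :: "('v,'a,'k::plus) kq \<Rightarrow> ('v,'a,'k) kq \<Rightarrow> ('v,'a,'k) kq" where
  "kq_add f g = (\<lambda>p. f p + g p)"

definition kq_diff :: "('v,'a,'k::minus) kq \<Rightarrow> ('v,'a,'k) kq \<Rightarrow> ('v,'a,'k) kq" where
  "kq_diff f g = (\<lambda>p. f p - g p)"

definition kq_smult :: "'k::times \<Rightarrow> ('v,'a,'k) kq \<Rightarrow> ('v,'a,'k) kq" where
  "kq_smult c f = (\<lambda>p. c * f p)"

definition path_elem :: "('v,'a) path \<Rightarrow> ('v,'a,'k::{zero,one}) kq" where
  "path_elem p = (\<lambda>q. if q = p then 1 else 0)"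

text \<open>Multiplication: the path p composed after q (written p q) is concatenation
when the source of p is the target of q, and 0 otherwise (extended bilinearly).\<close>
definition kq_mult :: "('v,'a,'c) gquiver_scheme \<Rightarrow> ('v,'a,'k::comm_semiring_1) kq
    \<Rightarrow> ('v,'a,'k) kq \<Rightarrow> ('v,'a,'k) kq" where
  "kq_mult Q f g = (\<lambda>(v, xs). \<Sum>i\<in>{0..length xs}.
      f (ptgt Q (v, drop i xs), take i xs) * g (v, drop i xs))"

inductive_set kq_ideal :: "('v,'a,'c) gquiver_scheme \<Rightarrow> ('v,'a,'k::comm_ring_1) kq set
    \<Rightarrow> ('v,'a,'k) kq set"
  for Q :: "('v,'a,'c) gquiver_scheme" and R :: "('v,'a,'k) kq set" where
  zero: "kq_zero \<in> kq_ideal Q R"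
| gen: "r \<in> R \<Longrightarrow> in_KQ Q x \<Longrightarrow> in_KQ Q y \<Longrightarrow> kq_mult Q (kq_mult Q x r) y \<in> kq_ideal Q R"
| add: "f \<in> kq_ideal Q R \<Longrightarrow> g \<in> kq_ideal Q R \<Longrightarrow> kq_add f g \<in> kq_ideal Q R"

text \<open>Homogeneous elements of e_j KQ e_i of degree n (representatives of Hom(P_i,P_j)
in degree n of the graded algebra KQ/<R>).\<close>
definition kq_hom :: "('v,'a,'c) gquiver_scheme \<Rightarrow> 'v \<Rightarrow> 'v \<Rightarrow> int \<Rightarrow> ('v,'a,'k::zero) kq set" where
  "kq_hom Q i j n = {f. in_KQ Q f \<and>
     (\<forall>p. f p \<noteq> 0 \<longrightarrow> psrc p = i \<and> ptgt Q p = j \<and> pdeg Q p = n)}"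

section \<open>Graded pinched gentle algebras\<close>

text \<open>Q is the whole quiver; its arrows are Ag (the arrows of Q^g) together with the
degree-zero loops gam v at the vertices v in Lv (the arrows of Q^p). Ig is the set of
relations of Q^g: a pair (x, y) stands for the length-two path x y (y then x).
alp, alm, bep, bem are the arrows alpha_v^+, alpha_v^-, beta_v^+, beta_v^- at v.\<close>
definition graded_pinched_gentle ::
  "('v,'a,'c) gquiver_scheme \<Rightarrow> 'a set \<Rightarrow> 'v set \<Rightarrow> ('v \<Rightarrow> 'a) \<Rightarrow>
   ('v \<Rightarrow> 'a) \<Rightarrow> ('v \<Rightarrow> 'a) \<Rightarrow> ('v \<Rightarrow> 'a) \<Rightarrow> ('v \<Rightarrow> 'a) \<Rightarrow> ('a \<times> 'a) set \<Rightarrow> bool" where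
  "graded_pinched_gentle Q Ag Lv gam alp alm bep bem Ig \<longleftrightarrow>
     finite (qV Q) \<and> finite (qA Q) \<and>
     (\<forall>x\<in>qA Q. qs Q x \<in> qV Q \<and> qt Q x \<in> qV Q) \<and>
     qA Q = Ag \<union> gam ` Lv \<and> Ag \<inter> gam ` Lv = {} \<and> Lv \<subseteq> qV Q \<and>
     \<comment> \<open>Q^p: degree-zero loops at distinct vertices\<close>
     inj_on gam Lv \<and>
     (\<forall>v\<in>Lv. qs Q (gam v) = v \<and> qt Q (gam v) = v \<and> qdeg Q (gam v) = 0) \<and>
     \<comment> \<open>(Q^g, <I^g>) gentle\<close>
     (\<forall>v\<in>qV Q. card {x\<in>Ag. qt Q x = v} \<le> 2 \<and> card {x\<in>Ag. qs Q x = v} \<le> 2) \<and>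
     Ig \<subseteq> {(x, y). x \<in> Ag \<and> y \<in> Ag \<and> qs Q x = qt Q y} \<and>
     (\<forall>x\<in>Ag. card {y\<in>Ag. qs Q x = qt Q y \<and> (x, y) \<in> Ig} \<le> 1) \<and>
     (\<forall>x\<in>Ag. card {y\<in>Ag. qs Q y = qt Q x \<and> (y, x) \<in> Ig} \<le> 1) \<and>
     (\<forall>x\<in>Ag. card {y\<in>Ag. qs Q x = qt Q y \<and> (x, y) \<notin> Ig} \<le> 1) \<and>
     (\<forall>x\<in>Ag. card {y\<in>Ag. qs Q y = qt Q x \<and> (y, x) \<notin> Ig} \<le> 1) \<and>
     \<comment> \<open>the arrows alpha_v^+-, beta_v^+- of Q^g at a vertex v carrying a loop of Q^p\<close>
     (\<forall>v\<in>Lv. alp v \<in> Ag \<and> alm v \<in> Ag \<and> bep v \<in> Ag \<and> bem v \<in> Ag \<and>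
        qs Q (alp v) = v \<and> qs Q (bep v) = v \<and> qt Q (alm v) = v \<and> qt Q (bem v) = v \<and>
        alp v \<noteq> bep v \<and> alm v \<noteq> bem v \<and>
        (bep v, alm v) \<in> Ig \<and> (alp v, bem v) \<in> Ig)"

text \<open>The generating set I = I^g \<union> I^p of the ideal, as elements of KQ.\<close>
definition pg_rels ::
  "('v,'a,'c) gquiver_scheme \<Rightarrow> 'v set \<Rightarrow> ('v \<Rightarrow> 'a) \<Rightarrow>
   ('v \<Rightarrow> 'a) \<Rightarrow> ('v \<Rightarrow> 'a) \<Rightarrow> ('v \<Rightarrow> 'a) \<Rightarrow> ('v \<Rightarrow> 'a) \<Rightarrow> ('a \<times> 'a) set \<Rightarrow>
   ('v,'a,'k::comm_ring_1) kq set" where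
  "pg_rels Q Lv gam alp alm bep bem Ig =
     {path_elem (qs Q y, [x, y]) | x y. (x, y) \<in> Ig} \<union>
     (\<Union>v\<in>Lv.
       { kq_add (path_elem (v, [bep v, gam v])) (path_elem (v, [bep v])),
         kq_add (path_elem (qs Q (bem v), [gam v, bem v])) (path_elem (qs Q (bem v), [bem v])),
         kq_diff (path_elem (v, [alp v, gam v])) (path_elem (v, [alp v])),
         kq_diff (path_elem (qs Q (alm v), [gam v, alm v])) (path_elem (qs Q (alm v), [alm v])) })"

definition graded_kronecker ::
  "('v,'a,'c) gquiver_scheme \<Rightarrow> 'a set \<Rightarrow> 'v set \<Rightarrow> 'a \<Rightarrow> 'a \<Rightarrow> 'v \<Rightarrow> 'v \<Rightarrow> bool" where
  "graded_kronecker Q Ag Lv al be v1 v2 \<longleftrightarrow>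
     al \<in> Ag \<and> be \<in> Ag \<and> al \<noteq> be \<and>
     qs Q al \<noteq> qt Q al \<and> qs Q be \<noteq> qt Q be \<and>
     qs Q al = v1 \<and> qs Q be = v1 \<and> qt Q al = v2 \<and> qt Q be = v2 \<and>
     qdeg Q al = qdeg Q be \<and> v1 \<notin> Lv \<and> v2 \<notin> Lv"

definition oriented_cycle_g ::
  "('v,'a,'c) gquiver_scheme \<Rightarrow> 'a set \<Rightarrow> ('a \<times> 'a) set \<Rightarrow> 'a list \<Rightarrow> bool" where
  "oriented_cycle_g Q Ag Ig c \<longleftrightarrow> c \<noteq> [] \<and> set c \<subseteq> Ag \<and>
     (\<forall>i. Suc i < length c \<longrightarrow> qs Q (c ! i) = qt Q (c ! Suc i) \<and> (c ! i, c ! Suc i) \<notin> Ig) \<and>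
     qt Q (hd c) = qs Q (last c)"

definition acyclic_kronecker ::
  "('v,'a,'c) gquiver_scheme \<Rightarrow> 'a set \<Rightarrow> ('a \<times> 'a) set \<Rightarrow> 'a \<Rightarrow> 'a \<Rightarrow> bool" where
  "acyclic_kronecker Q Ag Ig al be \<longleftrightarrow>
     \<not> (\<exists>c. oriented_cycle_g Q Ag Ig c \<and> (al \<in> set c \<or> be \<in> set c))"

section \<open>One-sided twisted complexes over P(Lambda)\<close>

text \<open>An object of P(Lambda)^pre-tr is a list [(v_0, r_0), ..., (v_{m-1}, r_{m-1})]
(standing for the sum of the P_{v_i}[r_i]) together with a matrix D of elements of
Lambda (represented in KQ).\<close>
type_synonym 'v tw_obj = "('v \<times> int) list"
type_synonym ('v,'a,'k) kq_mat = "nat \<Rightarrow> nat \<Rightarrow> ('v,'a,'k) kq"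

definition tw_mor :: "('v,'a,'c) gquiver_scheme \<Rightarrow> 'v tw_obj \<Rightarrow> 'v tw_obj \<Rightarrow> int \<Rightarrow>
    ('v,'a,'k::zero) kq_mat set" where
  "tw_mor Q X Y n = {f.
     (\<forall>k l. k < length Y \<and> l < length X \<longrightarrow>
        f k l \<in> kq_hom Q (fst (X ! l)) (fst (Y ! k)) (n - snd (X ! l) + snd (Y ! k))) \<and>
     (\<forall>k l. \<not> (k < length Y \<and> l < length X) \<longrightarrow> f k l = kq_zero)}"

definition mat_zero :: "('v,'a,'k::zero) kq_mat" where
  "mat_zero = (\<lambda>k l. kq_zero)"

definition mat_smult :: "'k::times \<Rightarrow> ('v,'a,'k) kq_mat \<Rightarrow> ('v,'a,'k) kq_mat" where
  "mat_smult c f = (\<lambda>k l. kq_smult c (f k l))"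

definition tw_comp :: "('v,'a,'c) gquiver_scheme \<Rightarrow> nat \<Rightarrow> ('v,'a,'k::comm_semiring_1) kq_mat \<Rightarrow>
    ('v,'a,'k) kq_mat \<Rightarrow> ('v,'a,'k) kq_mat" where
  "tw_comp Q m g f = (\<lambda>k l p. \<Sum>j<m. kq_mult Q (g k j) (f j l) p)"

text \<open>Differential on End(X, D) in degree n: d f = d_naive f + D f - (-1)^n f D,
where d_naive = 0 since P(Lambda) has zero differential.\<close>
definition tw_d :: "('v,'a,'c) gquiver_scheme \<Rightarrow> 'v tw_obj \<Rightarrow> ('v,'a,'k::comm_ring_1) kq_mat \<Rightarrow>
    int \<Rightarrow> ('v,'a,'k) kq_mat \<Rightarrow> ('v,'a,'k) kq_mat" where
  "tw_d Q X D n f = (\<lambda>k l p. tw_comp Q (length X) D f k l p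
       - (if even n then 1 else -1) * tw_comp Q (length X) f D k l p)"

definition mat_equiv :: "('v,'a,'c) gquiver_scheme \<Rightarrow> ('v,'a,'k::comm_ring_1) kq set \<Rightarrow>
    ('v,'a,'k) kq_mat \<Rightarrow> ('v,'a,'k) kq_mat \<Rightarrow> bool" where
  "mat_equiv Q R f g \<longleftrightarrow> (\<forall>k l. kq_diff (f k l) (g k l) \<in> kq_ideal Q R)"

definition tw_cocycle :: "('v,'a,'c) gquiver_scheme \<Rightarrow> ('v,'a,'k::comm_ring_1) kq set \<Rightarrow>
    'v tw_obj \<Rightarrow> ('v,'a,'k) kq_mat \<Rightarrow> int \<Rightarrow> ('v,'a,'k) kq_mat \<Rightarrow> bool" where
  "tw_cocycle Q R X D n f \<longleftrightarrow> f \<in> tw_mor Q X X n \<and> mat_equiv Q R (tw_d Q X D n f) mat_zero"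

definition tw_cohomologous :: "('v,'a,'c) gquiver_scheme \<Rightarrow> ('v,'a,'k::comm_ring_1) kq set \<Rightarrow>
    'v tw_obj \<Rightarrow> ('v,'a,'k) kq_mat \<Rightarrow> int \<Rightarrow> ('v,'a,'k) kq_mat \<Rightarrow> ('v,'a,'k) kq_mat \<Rightarrow> bool" where
  "tw_cohomologous Q R X D n f f' \<longleftrightarrow>
     (\<exists>g \<in> tw_mor Q X X (n - 1).
        mat_equiv Q R (\<lambda>k l. kq_diff (f k l) (f' k l)) (tw_d Q X D (n - 1) g))"

text \<open>Given a DG algebra presented by its cocycles Z n, the relation E n (same class in
H^n), product and scalar multiplication on representatives, and zero: H^* is
isomorphic as a graded K-algebra to K[x]/(x^2) with |x| = 1, i.e. there are classes
[u] in H^0 and [x] in H^1 such that a + b x |-> a[u] + b[x] is a multiplicative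
bijection of graded vector spaces (written out on the basis 1, x).\<close>
definition graded_iso_dual_numbers ::
  "(int \<Rightarrow> 'm \<Rightarrow> bool) \<Rightarrow> (int \<Rightarrow> 'm \<Rightarrow> 'm \<Rightarrow> bool) \<Rightarrow> ('m \<Rightarrow> 'm \<Rightarrow> 'm) \<Rightarrow>
   ('k::field \<Rightarrow> 'm \<Rightarrow> 'm) \<Rightarrow> 'm \<Rightarrow> bool" where
  "graded_iso_dual_numbers Z E mult smult zero \<longleftrightarrow>
     (\<exists>u x. Z 0 u \<and> Z 1 x \<and>
        \<comment> \<open>multiplicativity on the basis\<close>
        E 0 (mult u u) u \<and> E 1 (mult u x) x \<and> E 1 (mult x u) x \<and> E 2 (mult x x) zero \<and>
        \<comment> \<open>surjectivity\<close>
        (\<forall>f. Z 0 f \<longrightarrow> (\<exists>c. E 0 f (smult c u))) \<and>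
        (\<forall>f. Z 1 f \<longrightarrow> (\<exists>c. E 1 f (smult c x))) \<and>
        (\<forall>n f. n \<noteq> 0 \<and> n \<noteq> 1 \<and> Z n f \<longrightarrow> E n f zero) \<and>
        \<comment> \<open>injectivity\<close>
        (\<forall>c. E 0 (smult c u) zero \<longrightarrow> c = 0) \<and>
        (\<forall>c. E 1 (smult c x) zero \<longrightarrow> c = 0))"

definition H_End_iso_dual_numbers :: "('v,'a,'c) gquiver_scheme \<Rightarrow> ('v,'a,'k::field) kq set \<Rightarrow>
    'v tw_obj \<Rightarrow> ('v,'a,'k) kq_mat \<Rightarrow> bool" where
  "H_End_iso_dual_numbers Q R X D \<longleftrightarrow>
     graded_iso_dual_numbers (tw_cocycle Q R X D) (tw_cohomologous Q R X D)
       (tw_comp Q (length X)) (mat_smult :: 'k \<Rightarrow> _) mat_zero"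

definition kron_obj :: "('v,'a,'c) gquiver_scheme \<Rightarrow> 'a \<Rightarrow> 'v \<Rightarrow> 'v \<Rightarrow> 'v tw_obj" where
  "kron_obj Q al v1 v2 = [(v2, qdeg Q al), (v1, 1)]"

definition kron_diff :: "'a \<Rightarrow> 'a \<Rightarrow> 'v \<Rightarrow> 'k::comm_ring_1 \<Rightarrow> ('v,'a,'k) kq_mat" where
  "kron_diff al be v1 mu = (\<lambda>k l. if k = 0 \<and> l = 1
      then kq_add (path_elem (v1, [al])) (kq_smult mu (path_elem (v1, [be])))
      else kq_zero)"

end

(*
  The key fact is that every path of Q running from v2 to v1 lies in the ideal <I>.  Loops
  gamma_v on such a path can be removed: modulo the pinched relations, r gamma_v = +-r for the
  arrow r of Q^g leaving v.  What remains is a path of Q^g; unless it contains a relation of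
  I^g, prefixing alpha or beta (one of them forms no relation with its last arrow) closes it
  into an oriented cycle through the Kronecker, which acyclicity forbids.  As alpha and beta
  are the only arrows leaving v1 or entering v2, every path between v1 and v2 other than
  e_1, e_2, alpha, beta runs from v2 to v1 at some point, so modulo <I> every endomorphism of B
  is a combination of these four.  Since d(c_2 e_2 + c_1 e_1) = (c_1 - c_2)(alpha + mu beta),
  the degree 0 cocycles are the multiples of the identity, H^1 is spanned by alpha modulo
  alpha + mu beta, and all other degrees vanish.  No element of <I> has a coefficient at
  e_1, e_2, alpha or beta, so the classes of the identity and of alpha are nonzero.
*)

theory Submission
  imports Defs
begin

section \<open>The path algebra\<close>

lemma kq_zero_apply [simp]: "kq_zero p = 0"
  by (simp add: kq_zero_def)

lemma kq_smult_apply: "kq_smult c f p = c * f p"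
  by (simp add: kq_smult_def)

lemma kq_mult_apply:
  "kq_mult Q f g (w, zs) =
     (\<Sum>i\<in>{0..length zs}. f (ptgt Q (w, drop i zs), take i zs) * g (w, drop i zs))"
  by (simp add: kq_mult_def)

lemma kq_mult_Nil: "kq_mult Q f g (w, []) = f (w, []) * g (w, [])"
  by (simp add: kq_mult_def ptgt_def)

lemma kq_mult_singleton:
  "kq_mult Q f g (w, [z]) = f (qt Q z, []) * g (w, [z]) + f (w, [z]) * g (w, [])"
  by (simp add: kq_mult_def ptgt_def)

lemma kq_mult_zero_left [simp]: "kq_mult Q kq_zero g = kq_zero"
  by (rule ext) (simp add: kq_mult_def split: prod.split)

lemma kq_mult_zero_right [simp]: "kq_mult Q f kq_zero = kq_zero"
  by (rule ext) (simp add: kq_mult_def split: prod.split)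

lemma kq_mult_add_left: "kq_mult Q (kq_add f g) h = kq_add (kq_mult Q f h) (kq_mult Q g h)"
  by (rule ext) (simp add: kq_mult_def kq_add_def sum.distrib distrib_right split: prod.split)

lemma kq_mult_add_right: "kq_mult Q f (kq_add g h) = kq_add (kq_mult Q f g) (kq_mult Q f h)"
  by (rule ext) (simp add: kq_mult_def kq_add_def sum.distrib distrib_left split: prod.split)

lemma kq_mult_diff_left:
  fixes f :: "('v,'a,'k::comm_ring_1) kq"
  shows "kq_mult Q (kq_diff f g) h = kq_diff (kq_mult Q f h) (kq_mult Q g h)"
  by (rule ext)
     (simp add: kq_mult_def kq_diff_def sum_subtractf[symmetric] left_diff_distrib split: prod.split)

lemma kq_mult_diff_right:
  fixes f :: "('v,'a,'k::comm_ring_1) kq"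
  shows "kq_mult Q f (kq_diff g h) = kq_diff (kq_mult Q f g) (kq_mult Q f h)"
  by (rule ext)
     (simp add: kq_mult_def kq_diff_def sum_subtractf[symmetric] right_diff_distrib split: prod.split)

lemma kq_mult_smult_left: "kq_mult Q (kq_smult c f) h = kq_smult c (kq_mult Q f h)"
  by (rule ext) (simp add: kq_mult_def kq_smult_def sum_distrib_left mult.assoc split: prod.split)

lemma kq_mult_smult_right: "kq_mult Q f (kq_smult c h) = kq_smult c (kq_mult Q f h)"
  by (rule ext)
     (simp add: kq_mult_def kq_smult_def sum_distrib_left mult.left_commute split: prod.split)

lemma path_elem_mult_apply:
  "kq_mult Q (path_elem (a, xs)) (path_elem (b, ys) :: ('v,'a,'k::comm_semiring_1) kq) (w, zs) =
     (if a = ptgt Q (b, ys) \<and> w = b \<and> zs = xs @ ys then 1 else 0)"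
proof -
  let ?t = "\<lambda>i. path_elem (a, xs) (ptgt Q (w, drop i zs), take i zs) *
                 (path_elem (b, ys) (w, drop i zs) :: 'k)"
  have only_split: "i = length xs \<and> w = b \<and> zs = xs @ ys \<and> a = ptgt Q (b, ys)"
    if "?t i \<noteq> 0" "i \<in> {0..length zs}" for i
    using that by (auto simp: path_elem_def split: if_splits)
  show ?thesis
  proof (cases "a = ptgt Q (b, ys) \<and> w = b \<and> zs = xs @ ys")
    case True
    then have "kq_mult Q (path_elem (a, xs)) (path_elem (b, ys)) (w, zs) = sum ?t {length xs}"
      unfolding kq_mult_apply by (intro sum.mono_neutral_right) (use only_split in auto)
    then show ?thesis
      using True by (simp add: path_elem_def)
  next
    case False
    then have "kq_mult Q (path_elem (a, xs)) (path_elem (b, ys)) (w, zs) = (0::'k)"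
      unfolding kq_mult_apply by (intro sum.neutral ballI) (metis only_split)
    then show ?thesis
      using False by simp
  qed
qed

lemma path_elem_mult:
  "kq_mult Q (path_elem (a, xs)) (path_elem (b, ys) :: ('v,'a,'k::comm_semiring_1) kq) =
     (if a = ptgt Q (b, ys) then path_elem (b, xs @ ys) else kq_zero)"
proof (rule ext)
  fix p :: "('v,'a) path"
  show "kq_mult Q (path_elem (a, xs)) (path_elem (b, ys) :: ('v,'a,'k) kq) p =
      (if a = ptgt Q (b, ys) then path_elem (b, xs @ ys) else kq_zero) p"
    by (cases p) (simp only: path_elem_mult_apply, simp add: path_elem_def)
qed

lemma path_elem_sandwich:
  assumes "ptgt Q (s, ys) = b" and "ptgt Q (b, zs) = a"
  shows "kq_mult Q (kq_mult Q (path_elem (a, xs)) (path_elem (b, zs))) (path_elem (s, ys)) =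
    (path_elem (s, xs @ zs @ ys) :: ('v,'a,'k::comm_semiring_1) kq)"
proof -
  have "ptgt Q (s, zs @ ys) = a"
    using assms by (cases zs) (auto simp: ptgt_def)
  then show ?thesis
    using assms by (simp add: path_elem_mult)
qed

lemma in_KQ_path_elem: "valid_path Q p \<Longrightarrow> in_KQ Q (path_elem p)"
  by (simp add: in_KQ_def path_elem_def)

lemma in_KQ_smult:
  fixes c :: "'k::mult_zero"
  assumes "in_KQ Q f"
  shows "in_KQ Q (kq_smult c f)"
proof -
  have "{p. c * f p \<noteq> 0} \<subseteq> {p. f p \<noteq> 0}"
    by auto
  then show ?thesis
    using assms unfolding in_KQ_def kq_smult_def by (auto intro: finite_subset)
qed

lemma kq_ideal_cong: "f \<in> kq_ideal Q R \<Longrightarrow> (\<And>p. g p = f p) \<Longrightarrow> g \<in> kq_ideal Q R"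
  by (metis ext)

lemma kq_ideal_vanishing: "(\<And>p. f p = 0) \<Longrightarrow> f \<in> kq_ideal Q R"
  by (rule kq_ideal_cong[OF kq_ideal.zero]) simp

lemma kq_ideal_smult:
  assumes "f \<in> kq_ideal Q R"
  shows "kq_smult c f \<in> kq_ideal Q R"
  using assms
proof (induction rule: kq_ideal.induct)
  case zero
  show ?case
    by (rule kq_ideal_vanishing) (simp add: kq_smult_def)
next
  case (gen r x y)
  have "kq_smult c (kq_mult Q (kq_mult Q x r) y) = kq_mult Q (kq_mult Q (kq_smult c x) r) y"
    by (simp add: kq_mult_smult_left)
  then show ?case
    using gen by (simp add: kq_ideal.gen in_KQ_smult)
next
  case (add f g)
  have "kq_smult c (kq_add f g) = kq_add (kq_smult c f) (kq_smult c g)"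
    by (rule ext) (simp add: kq_smult_def kq_add_def distrib_left)
  then show ?case
    using add by (simp add: kq_ideal.add)
qed

lemma kq_ideal_diff:
  assumes "f \<in> kq_ideal Q R" "g \<in> kq_ideal Q R"
  shows "kq_diff f g \<in> kq_ideal Q R"
  by (rule kq_ideal_cong[OF kq_ideal.add[OF assms(1) kq_ideal_smult[OF assms(2), of "-1"]]])
     (simp add: kq_diff_def kq_add_def kq_smult_def)

lemma kq_ideal_restrict:
  assumes "finite {p. f p \<noteq> 0}"
    and "\<And>p. f p \<noteq> 0 \<Longrightarrow> P p \<Longrightarrow> path_elem p \<in> kq_ideal Q R"
  shows "(\<lambda>q. if P q then f q else 0) \<in> kq_ideal Q R"
proof -
  have "(\<lambda>q. if P q \<and> q \<in> S then f q else 0) \<in> kq_ideal Q R"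
    if "finite S" "S \<subseteq> {p. f p \<noteq> 0}" for S
    using that
  proof (induction S rule: finite_induct)
    case empty
    show ?case
      by (rule kq_ideal_vanishing) simp
  next
    case (insert x S)
    then have IH: "(\<lambda>q. if P q \<and> q \<in> S then f q else 0) \<in> kq_ideal Q R"
      by simp
    show ?case
    proof (cases "P x")
      case True
      have "kq_smult (f x) (path_elem x) \<in> kq_ideal Q R"
        using insert.prems True by (simp add: assms(2) kq_ideal_smult)
      from kq_ideal.add[OF IH this] show ?thesis
        by (rule kq_ideal_cong)
           (use insert.hyps True in \<open>auto simp: kq_add_def kq_smult_def path_elem_def\<close>)
    next
      case False
      show ?thesis
        by (rule kq_ideal_cong[OF IH]) (use False in auto)
    qed
  qed
  from this[OF assms(1) subset_refl] show ?thesis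
    by (rule kq_ideal_cong) auto
qed

lemma kq_hom_support:
  "f \<in> kq_hom Q i j n \<Longrightarrow> f p \<noteq> 0 \<Longrightarrow> valid_path Q p \<and> psrc p = i \<and> ptgt Q p = j \<and> pdeg Q p = n"
  unfolding kq_hom_def in_KQ_def by blast

lemma kq_hom_finite_support: "f \<in> kq_hom Q i j n \<Longrightarrow> finite {p. f p \<noteq> 0}"
  by (simp add: kq_hom_def in_KQ_def)

lemma kq_hom_trivial_path_coeff: "f \<in> kq_hom Q i j n \<Longrightarrow> n \<noteq> 0 \<Longrightarrow> f (w, []) = 0"
  using kq_hom_support[of f Q i j n "(w, [])"] by (auto simp: pdeg_def)

lemma kq_hom_arrow_coeff: "f \<in> kq_hom Q i j n \<Longrightarrow> n \<noteq> qdeg Q z \<Longrightarrow> f (w, [z]) = 0"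
  using kq_hom_support[of f Q i j n "(w, [z])"] by (auto simp: pdeg_def)

lemma kq_zero_hom: "kq_zero \<in> kq_hom Q i j n"
  by (simp add: kq_hom_def in_KQ_def)

lemma kq_smult_hom:
  fixes c :: "'k::mult_zero"
  assumes "f \<in> kq_hom Q i j n"
  shows "kq_smult c f \<in> kq_hom Q i j n"
proof -
  have "kq_smult c f p \<noteq> 0 \<Longrightarrow> f p \<noteq> 0" for p
    by (auto simp: kq_smult_def)
  then show ?thesis
    using assms in_KQ_smult[of Q f c] unfolding kq_hom_def by blast
qed

lemma path_elem_hom:
  "valid_path Q p \<Longrightarrow> psrc p = i \<Longrightarrow> ptgt Q p = j \<Longrightarrow> pdeg Q p = n \<Longrightarrow> path_elem p \<in> kq_hom Q i j n"
  using in_KQ_path_elem[of Q p] by (auto simp: kq_hom_def path_elem_def split: if_splits)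

section \<open>Cohomology of twisted complexes\<close>

lemma mat_zero_tw_mor: "mat_zero \<in> tw_mor Q X Y n"
  by (simp add: tw_mor_def mat_zero_def kq_zero_hom)

lemma tw_cohomologous_exact:
  assumes "g \<in> tw_mor Q X X (n - 1)"
    and "\<And>k l p. f k l p - f' k l p = tw_d Q X D (n - 1) g k l p"
  shows "tw_cohomologous Q R X D n f f'"
  unfolding tw_cohomologous_def mat_equiv_def
  by (intro bexI[OF _ assms(1)] allI kq_ideal_vanishing) (simp add: kq_diff_def assms(2))

lemma tw_cohomologous_refl: "tw_cohomologous Q R X D n f f"
  by (rule tw_cohomologous_exact[OF mat_zero_tw_mor])
     (simp add: tw_d_def tw_comp_def mat_zero_def)

lemma tw_cohomologous_mat_equiv_trans:
  assumes "mat_equiv Q R f f'" and "tw_cohomologous Q R X D n f' f''"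
  shows "tw_cohomologous Q R X D n f f''"
proof -
  obtain g where g: "g \<in> tw_mor Q X X (n - 1)"
    and cobound: "mat_equiv Q R (\<lambda>k l. kq_diff (f' k l) (f'' k l)) (tw_d Q X D (n - 1) g)"
    using assms(2) unfolding tw_cohomologous_def by blast
  have "kq_diff (kq_diff (f k l) (f'' k l)) (tw_d Q X D (n - 1) g k l) \<in> kq_ideal Q R" for k l
    using kq_ideal.add[OF assms(1)[unfolded mat_equiv_def, rule_format, of k l]
        cobound[unfolded mat_equiv_def, rule_format, of k l]]
    by (rule kq_ideal_cong) (simp add: kq_diff_def kq_add_def)
  then show ?thesis
    unfolding tw_cohomologous_def mat_equiv_def using g by blast
qed

lemma successively_iff_nth:
  "successively P xs \<longleftrightarrow> (\<forall>i. Suc i < length xs \<longrightarrow> P (xs ! i) (xs ! Suc i))"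
proof (induction P xs rule: successively.induct)
  case (3 P x y xs)
  have "(\<forall>i. Suc i < length (x # y # xs) \<longrightarrow> P ((x # y # xs) ! i) ((x # y # xs) ! Suc i)) \<longleftrightarrow>
      P x y \<and> (\<forall>i. Suc i < length (y # xs) \<longrightarrow> P ((y # xs) ! i) ((y # xs) ! Suc i))"
    by (simp add: All_less_Suc2 del: nth_Cons_Suc)
  with 3 show ?case
    by simp
qed auto

lemma successively_conj:
  "successively (\<lambda>x y. P x y \<and> R x y) xs \<longleftrightarrow> successively P xs \<and> successively R xs"
  by (induction P xs rule: successively.induct) auto

lemma not_successively_split:
  "\<not> successively P xs \<Longrightarrow> \<exists>ys x y zs. xs = ys @ x # y # zs \<and> \<not> P x y"
proof (induction P xs rule: successively.induct)
  case (3 P x y xs)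
  show ?case
  proof (cases "P x y")
    case True
    with 3 obtain ys a b zs where "y # xs = ys @ a # b # zs" "\<not> P a b"
      by auto
    then show ?thesis
      by (metis append_Cons)
  next
    case False
    then show ?thesis
      by (metis append_Nil)
  qed
qed auto

lemma valid_path_iff:
  "valid_path Q (v, xs) \<longleftrightarrow> v \<in> qV Q \<and> set xs \<subseteq> qA Q \<and> (xs \<noteq> [] \<longrightarrow> qs Q (last xs) = v) \<and>
     successively (\<lambda>x y. qs Q x = qt Q y) xs"
  by (simp add: valid_path_def successively_iff_nth)

lemma valid_path_prefix:
  "valid_path Q (s, xs @ z # ys) \<Longrightarrow> qt Q z \<in> qV Q \<Longrightarrow> valid_path Q (qt Q z, xs)"
  by (auto simp: valid_path_iff successively_append_iff)

lemma valid_path_suffix: "valid_path Q (s, xs @ ys) \<Longrightarrow> valid_path Q (s, ys)"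
  by (auto simp: valid_path_iff successively_append_iff)

lemma ptgt_suffix: "valid_path Q (s, xs @ z # ys) \<Longrightarrow> ptgt Q (s, ys) = qs Q z"
  by (cases ys) (auto simp: valid_path_iff successively_append_iff ptgt_def)

lemma valid_path_remove_loop:
  assumes "valid_path Q (s, xs @ r # g # ys)" and "qs Q g = qt Q g"
  shows "valid_path Q (s, xs @ r # ys)"
proof -
  have "xs @ r # g # ys = (xs @ [r]) @ g # ys" "xs @ r # ys = (xs @ [r]) @ ys"
    by simp_all
  then show ?thesis
    using assms unfolding valid_path_iff by (cases ys) (auto simp: successively_append_iff)
qed

section \<open>Pinched gentle algebras\<close>

lemma eq_either_if_card_le_2:
  assumes "finite A" "card {x\<in>A. P x} \<le> 2" "a \<in> A" "b \<in> A" "a \<noteq> b" "P a" "P b" "z \<in> A" "P z"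
  shows "z = a \<or> z = b"
proof (rule ccontr)
  assume "\<not> (z = a \<or> z = b)"
  then have "card {a, b, z} = 3"
    using assms by auto
  moreover have "card {a, b, z} \<le> card {x\<in>A. P x}"
    using assms by (intro card_mono) auto
  ultimately show False
    using assms(2) by simp
qed

locale pinched_gentle =
  fixes Q :: "('v,'a) gquiver" and Ag :: "'a set" and Lv :: "'v set"
    and gam alp alm bep bem :: "'v \<Rightarrow> 'a" and Ig :: "('a \<times> 'a) set"
  assumes pinched_gentle: "graded_pinched_gentle Q Ag Lv gam alp alm bep bem Ig"
begin

abbreviation rels where "rels \<equiv> pg_rels Q Lv gam alp alm bep bem Ig"

lemma arrow_ends_vertices: "x \<in> qA Q \<Longrightarrow> qs Q x \<in> qV Q \<and> qt Q x \<in> qV Q"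
  using pinched_gentle by (simp add: graded_pinched_gentle_def)

lemma arrows_eq: "qA Q = Ag \<union> gam ` Lv"
  using pinched_gentle by (simp add: graded_pinched_gentle_def)

lemma finite_Ag: "finite Ag"
proof -
  have "finite (qA Q)"
    using pinched_gentle unfolding graded_pinched_gentle_def by blast
  then show ?thesis
    using arrows_eq by simp
qed

lemma loop_ends: "v \<in> Lv \<Longrightarrow> qs Q (gam v) = v \<and> qt Q (gam v) = v"
  using pinched_gentle by (simp add: graded_pinched_gentle_def)

lemma pinched_arrows:
  assumes "v \<in> Lv"
  shows "alp v \<in> Ag \<and> bep v \<in> Ag \<and> qs Q (alp v) = v \<and> qs Q (bep v) = v \<and> qt Q (alm v) = v \<and>
    qt Q (bem v) = v \<and> alp v \<noteq> bep v"
  using pinched_gentle assms by (simp add: graded_pinched_gentle_def)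

lemma arrow_at_unpinched_vertex: "v \<notin> Lv \<Longrightarrow> z \<in> qA Q \<Longrightarrow> qs Q z = v \<or> qt Q z = v \<Longrightarrow> z \<in> Ag"
  using arrows_eq loop_ends by auto

lemma at_most_two_out:
  "v \<in> qV Q \<Longrightarrow> card {x\<in>Ag. qs Q x = v} \<le> 2"
  using pinched_gentle by (simp add: graded_pinched_gentle_def)

lemma at_most_two_in:
  "v \<in> qV Q \<Longrightarrow> card {x\<in>Ag. qt Q x = v} \<le> 2"
  using pinched_gentle by (simp add: graded_pinched_gentle_def)

lemma at_most_one_relation_after:
  "y \<in> Ag \<Longrightarrow> card {x\<in>Ag. qs Q x = qt Q y \<and> (x, y) \<in> Ig} \<le> 1"
  using pinched_gentle by (simp add: graded_pinched_gentle_def)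

lemma arrow_out_of_pinched_vertex:
  assumes "v \<in> Lv" "z \<in> Ag" "qs Q z = v"
  shows "z = alp v \<or> z = bep v"
proof -
  have "v \<in> qV Q"
    using pinched_gentle assms(1) by (auto simp: graded_pinched_gentle_def)
  then show ?thesis
    using eq_either_if_card_le_2[OF finite_Ag at_most_two_out] pinched_arrows[OF assms(1)] assms
    by blast
qed

lemma sandwich_in_ideal:
  assumes "r \<in> rels" and "valid_path Q (s, xs @ z # zs @ ys)"
  shows "kq_mult Q (kq_mult Q (path_elem (qt Q z, xs)) r) (path_elem (s, ys)) \<in> kq_ideal Q rels"
proof (rule kq_ideal.gen[OF assms(1)])
  have "z \<in> qA Q"
    using assms(2) by (simp add: valid_path_iff)
  then show "in_KQ Q (path_elem (qt Q z, xs))"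
    using assms(2) arrow_ends_vertices by (simp add: in_KQ_path_elem valid_path_prefix)
  show "in_KQ Q (path_elem (s, ys))"
    using valid_path_suffix[of Q s "xs @ z # zs" ys] assms(2) by (simp add: in_KQ_path_elem)
qed

lemma relation_path_in_ideal:
  assumes "valid_path Q (s, xs @ x # y # ys)" and "(x, y) \<in> Ig"
  shows "(path_elem (s, xs @ x # y # ys) :: ('v,'a,'k::comm_ring_1) kq) \<in> kq_ideal Q rels"
proof -
  have rel: "(path_elem (qs Q y, [x, y]) :: ('v,'a,'k) kq) \<in> rels"
    using assms(2) unfolding pg_rels_def by blast
  have "ptgt Q (s, ys) = qs Q y"
    using ptgt_suffix[of Q s "xs @ [x]" y ys] assms(1) by simp
  then have "kq_mult Q (kq_mult Q (path_elem (qt Q x, xs)) (path_elem (qs Q y, [x, y])))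
      (path_elem (s, ys)) = (path_elem (s, xs @ [x, y] @ ys) :: ('v,'a,'k) kq)"
    by (intro path_elem_sandwich) (simp_all add: ptgt_def)
  with sandwich_in_ideal[OF rel, of s xs x "[y]" ys] assms(1) show ?thesis
    by simp
qed

lemma pinched_loop_elim:
  assumes "valid_path Q (s, xs @ r # gam v # ys)" and "v \<in> Lv" and "r \<in> Ag"
    and "(path_elem (s, xs @ r # ys) :: ('v,'a,'k::comm_ring_1) kq) \<in> kq_ideal Q rels"
  shows "(path_elem (s, xs @ r # gam v # ys) :: ('v,'a,'k) kq) \<in> kq_ideal Q rels"
proof -
  let ?sandwich =
    "\<lambda>t :: ('v,'a,'k) kq. kq_mult Q (kq_mult Q (path_elem (qt Q r, xs)) t) (path_elem (s, ys))"
  let ?long = "path_elem (s, xs @ r # gam v # ys) :: ('v,'a,'k) kq"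
  let ?short = "path_elem (s, xs @ r # ys) :: ('v,'a,'k) kq"
  have "qs Q r = v"
    using assms(1) loop_ends[OF assms(2)] by (simp add: valid_path_iff successively_append_iff)
  then have r: "r = alp v \<or> r = bep v"
    using arrow_out_of_pinched_vertex assms(2,3) by blast
  have "ptgt Q (s, ys) = v"
    using ptgt_suffix[of Q s "xs @ [r]" "gam v" ys] assms(1) loop_ends[OF assms(2)] by simp
  then have long: "?sandwich (path_elem (v, [r, gam v])) = ?long"
    and short: "?sandwich (path_elem (v, [r])) = ?short"
    using path_elem_sandwich[of Q s ys v "[r, gam v]" "qt Q r" xs]
      path_elem_sandwich[of Q s ys v "[r]" "qt Q r" xs]
    by (simp_all add: ptgt_def)
  from r show ?thesis
  proof
    assume "r = alp v"
    then have "kq_diff (path_elem (v, [r, gam v])) (path_elem (v, [r]) :: ('v,'a,'k) kq) \<in> rels"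
      using assms(2) unfolding pg_rels_def by blast
    from sandwich_in_ideal[OF this, of s xs r "[gam v]" ys] assms(1)
    have "kq_diff ?long ?short \<in> kq_ideal Q rels"
      by (simp add: kq_mult_diff_left kq_mult_diff_right long short)
    from kq_ideal.add[OF this assms(4)] show ?thesis
      by (rule kq_ideal_cong) (simp add: kq_add_def kq_diff_def)
  next
    assume "r = bep v"
    then have "kq_add (path_elem (v, [r, gam v])) (path_elem (v, [r]) :: ('v,'a,'k) kq) \<in> rels"
      using assms(2) unfolding pg_rels_def by blast
    from sandwich_in_ideal[OF this, of s xs r "[gam v]" ys] assms(1)
    have "kq_add ?long ?short \<in> kq_ideal Q rels"
      by (simp add: kq_mult_add_left kq_mult_add_right long short)
    from kq_ideal_diff[OF this assms(4)] show ?thesis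
      by (rule kq_ideal_cong) (simp add: kq_add_def kq_diff_def)
  qed
qed

lemma split_at_first_loop:
  assumes "set bs \<subseteq> qA Q" and "\<exists>z\<in>set bs. z \<in> gam ` Lv"
    and "qt Q (hd bs) \<notin> Lv" and "qs Q (last bs) \<notin> Lv"
  obtains bs1 r v bs2 where "bs = bs1 @ r # gam v # bs2" "v \<in> Lv" "r \<in> Ag" "bs2 \<noteq> []"
proof -
  obtain ys g bs2 where split: "bs = ys @ g # bs2" "g \<in> gam ` Lv" "\<forall>y\<in>set ys. y \<notin> gam ` Lv"
    using split_list_first_prop[OF assms(2)] by blast
  obtain v where v: "v \<in> Lv" "g = gam v"
    using split(2) by blast
  have "ys \<noteq> []" and "bs2 \<noteq> []"
    using split(1) assms(3,4) loop_ends[OF v(1)] v by auto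
  then obtain bs1 r where ys: "ys = bs1 @ [r]"
    by (metis rev_exhaust)
  have "r \<in> Ag"
    using assms(1) split arrows_eq by (auto simp: ys)
  show ?thesis
    using that[of bs1 r v bs2] split(1) v \<open>r \<in> Ag\<close> \<open>bs2 \<noteq> []\<close> by (simp add: ys)
qed

lemma rels_vanish_on_short_paths:
  assumes "r \<in> rels" and "length zs \<le> 1" and "\<forall>z\<in>set zs. qs Q z \<notin> Lv \<and> qt Q z \<notin> Lv"
  shows "(r :: ('v,'a,'k::comm_ring_1) kq) (w, zs) = 0"
proof -
  have "zs = [] \<or> (\<exists>z. zs = [z])"
    using assms(2) by (cases zs) auto
  then show ?thesis
    using assms(1,3) pinched_arrows by (auto simp: pg_rels_def path_elem_def kq_add_def kq_diff_def)
qed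

lemma ideal_vanishes_on_short_paths:
  assumes "(f :: ('v,'a,'k::comm_ring_1) kq) \<in> kq_ideal Q rels" and "length zs \<le> 1"
    and "\<forall>z\<in>set zs. qs Q z \<notin> Lv \<and> qt Q z \<notin> Lv"
  shows "f (w, zs) = 0"
  using assms
proof (induction arbitrary: w zs rule: kq_ideal.induct)
  case zero
  then show ?case
    by simp
next
  case (gen r x y)
  have "zs = [] \<or> (\<exists>z. zs = [z])"
    using gen.prems(1) by (cases zs) auto
  then show ?case
    using rels_vanish_on_short_paths[OF gen.hyps(1)] gen.prems
    by (auto simp: kq_mult_singleton kq_mult_Nil)
next
  case (add f g)
  then show ?case
    by (simp add: kq_add_def)
qed

end

section \<open>Paths through an acyclic graded Kronecker\<close>

locale acyclic_graded_kronecker = pinched_gentle Q Ag Lv gam alp alm bep bem Ig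
  for Q :: "('v,'a) gquiver" and Ag Lv gam alp alm bep bem Ig +
  fixes al be :: 'a and v1 v2 :: 'v
  assumes kronecker: "graded_kronecker Q Ag Lv al be v1 v2"
    and acyclic: "acyclic_kronecker Q Ag Ig al be"
begin

lemma kronecker_arrows:
  "al \<in> Ag" "be \<in> Ag" "qs Q al = v1" "qs Q be = v1" "qt Q al = v2" "qt Q be = v2"
  using kronecker by (auto simp: graded_kronecker_def)

lemma al_neq_be: "al \<noteq> be"
  using kronecker by (simp add: graded_kronecker_def)

lemma qdeg_be: "qdeg Q be = qdeg Q al"
  using kronecker by (simp add: graded_kronecker_def)

lemma kronecker_vertices_unpinched: "v1 \<notin> Lv" "v2 \<notin> Lv"
  using kronecker by (simp_all add: graded_kronecker_def)

lemma v1_neq_v2: "v1 \<noteq> v2"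
  using kronecker by (auto simp: graded_kronecker_def)

lemma kronecker_vertices: "v1 \<in> qV Q" "v2 \<in> qV Q"
  using arrow_ends_vertices[of al] kronecker_arrows arrows_eq by auto

lemma arrow_from_v1: "z \<in> qA Q \<Longrightarrow> qs Q z = v1 \<Longrightarrow> z = al \<or> z = be"
  using eq_either_if_card_le_2[OF finite_Ag at_most_two_out[OF kronecker_vertices(1)]]
    arrow_at_unpinched_vertex kronecker_arrows kronecker_vertices_unpinched al_neq_be by blast

lemma arrow_into_v2: "z \<in> qA Q \<Longrightarrow> qt Q z = v2 \<Longrightarrow> z = al \<or> z = be"
  using eq_either_if_card_le_2[OF finite_Ag at_most_two_in[OF kronecker_vertices(2)]]
    arrow_at_unpinched_vertex kronecker_arrows kronecker_vertices_unpinched al_neq_be by blast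

lemma kronecker_arrow_without_relation:
  assumes "y \<in> Ag" "qt Q y = v1"
  shows "(al, y) \<notin> Ig \<or> (be, y) \<notin> Ig"
proof (rule ccontr)
  assume "\<not> ((al, y) \<notin> Ig \<or> (be, y) \<notin> Ig)"
  then have "{al, be} \<subseteq> {x\<in>Ag. qs Q x = qt Q y \<and> (x, y) \<in> Ig}"
    using assms kronecker_arrows by auto
  from card_mono[OF _ this] have "card {al, be} \<le> 1"
    using at_most_one_relation_after[OF assms(1)] finite_Ag by force
  then show False
    using al_neq_be by simp
qed

lemma gentle_path_from_v2_to_v1_meets_relation:
  assumes "set bs \<subseteq> Ag" "bs \<noteq> []" "qt Q (hd bs) = v1" "qs Q (last bs) = v2"
    and "successively (\<lambda>x y. qs Q x = qt Q y) bs"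
  shows "\<not> successively (\<lambda>x y. (x, y) \<notin> Ig) bs"
proof
  assume no_relation: "successively (\<lambda>x y. (x, y) \<notin> Ig) bs"
  have "hd bs \<in> Ag"
    using assms(1,2) by auto
  then obtain z where z: "z = al \<or> z = be" "(z, hd bs) \<notin> Ig"
    using kronecker_arrow_without_relation assms(3) by blast
  have z_arrow: "z \<in> Ag" "qs Q z = v1" "qt Q z = v2"
    using z(1) kronecker_arrows by auto
  have "oriented_cycle_g Q Ag Ig (z # bs)"
    unfolding oriented_cycle_g_def
  proof (intro conjI)
    show "set (z # bs) \<subseteq> Ag"
      using assms(1) z_arrow by auto
    have "successively (\<lambda>x y. qs Q x = qt Q y \<and> (x, y) \<notin> Ig) (z # bs)"
      using assms(2,3,5) no_relation z(2) z_arrow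
      by (simp add: successively_conj successively_Cons)
    then show "\<forall>i. Suc i < length (z # bs) \<longrightarrow> qs Q ((z # bs) ! i) = qt Q ((z # bs) ! Suc i) \<and>
        ((z # bs) ! i, (z # bs) ! Suc i) \<notin> Ig"
      unfolding successively_iff_nth by blast
    show "qt Q (hd (z # bs)) = qs Q (last (z # bs))"
      using z_arrow assms(2,4) by auto
  qed simp
  then show False
    using acyclic z(1) unfolding acyclic_kronecker_def by auto
qed

lemma path_through_v2_to_v1_in_ideal:
  assumes "valid_path Q (s, xs @ bs @ ys)" and "bs \<noteq> []"
    and "qt Q (hd bs) = v1" and "qs Q (last bs) = v2"
  shows "(path_elem (s, xs @ bs @ ys) :: ('v,'a,'k::comm_ring_1) kq) \<in> kq_ideal Q rels"
  using assms
proof (induction "length bs" arbitrary: bs rule: less_induct)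
  case less
  have bs_arrows: "set bs \<subseteq> qA Q" and chain: "successively (\<lambda>x y. qs Q x = qt Q y) bs"
    using less.prems(1) by (auto simp: valid_path_iff successively_append_iff)
  show ?case
  proof (cases "\<exists>z\<in>set bs. z \<in> gam ` Lv")
    case True
    then obtain bs1 r v bs2
      where bs: "bs = bs1 @ r # gam v # bs2" "v \<in> Lv" "r \<in> Ag" "bs2 \<noteq> []"
      using split_at_first_loop bs_arrows less.prems(3,4) kronecker_vertices_unpinched by metis
    let ?shorter = "bs1 @ r # bs2"
    have whole: "xs @ bs @ ys = (xs @ bs1) @ r # gam v # (bs2 @ ys)"
      by (simp add: bs(1))
    have "valid_path Q (s, xs @ ?shorter @ ys)"
      using valid_path_remove_loop[of Q s "xs @ bs1" r "gam v" "bs2 @ ys"] less.prems(1)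
        loop_ends[OF bs(2)] unfolding whole by simp
    moreover have "hd ?shorter = hd bs" "last ?shorter = last bs"
      using bs(4) by (cases bs1; simp add: bs(1))+
    ultimately have "(path_elem (s, xs @ ?shorter @ ys) :: ('v,'a,'k) kq) \<in> kq_ideal Q rels"
      using less.hyps[of ?shorter] less.prems(3,4) by (simp add: bs(1))
    then show ?thesis
      using pinched_loop_elim[OF less.prems(1)[unfolded whole] bs(2,3)] unfolding whole by simp
  next
    case False
    then have "set bs \<subseteq> Ag"
      using bs_arrows arrows_eq by auto
    then have "\<not> successively (\<lambda>x y. (x, y) \<notin> Ig) bs"
      using gentle_path_from_v2_to_v1_meets_relation less.prems(2-4) chain by blast
    then obtain bs1 x y bs2 where "bs = bs1 @ x # y # bs2" "(x, y) \<in> Ig"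
      using not_successively_split by fastforce
    then show ?thesis
      using relation_path_in_ideal[of s "xs @ bs1" x y "bs2 @ ys"] less.prems(1) by simp
  qed
qed

lemma path_from_v2_to_v1_in_ideal:
  assumes "valid_path Q (v2, zs)" and "ptgt Q (v2, zs) = v1"
  shows "(path_elem (v2, zs) :: ('v,'a,'k::comm_ring_1) kq) \<in> kq_ideal Q rels"
proof -
  have "zs \<noteq> []"
    using assms(2) v1_neq_v2 by (auto simp: ptgt_def)
  then show ?thesis
    using path_through_v2_to_v1_in_ideal[of v2 "[]" zs "[]"] assms
    by (simp add: valid_path_iff ptgt_def)
qed

lemma cycle_at_v1_in_ideal:
  assumes "valid_path Q (v1, zs)" and "ptgt Q (v1, zs) = v1" and "zs \<noteq> []"
  shows "(path_elem (v1, zs) :: ('v,'a,'k::comm_ring_1) kq) \<in> kq_ideal Q rels"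
proof -
  obtain bs z where zs: "zs = bs @ [z]"
    using assms(3) by (metis rev_exhaust)
  have "z \<in> qA Q" "qs Q z = v1"
    using assms(1) by (auto simp: valid_path_iff zs)
  then have "qt Q z = v2"
    using arrow_from_v1 kronecker_arrows by blast
  moreover have "bs \<noteq> []"
    using assms(2) calculation v1_neq_v2 by (auto simp: ptgt_def zs)
  ultimately have "qt Q (hd bs) = v1" "qs Q (last bs) = v2"
    using assms(1,2) by (auto simp: zs ptgt_def valid_path_iff successively_append_iff)
  then show ?thesis
    using path_through_v2_to_v1_in_ideal[of v1 "[]" bs "[z]"] assms(1) \<open>bs \<noteq> []\<close>
    by (simp add: zs)
qed

lemma cycle_at_v2_in_ideal:
  assumes "valid_path Q (v2, zs)" and "ptgt Q (v2, zs) = v2" and "zs \<noteq> []"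
  shows "(path_elem (v2, zs) :: ('v,'a,'k::comm_ring_1) kq) \<in> kq_ideal Q rels"
proof -
  obtain z bs where zs: "zs = z # bs"
    using assms(3) by (cases zs) auto
  have "z \<in> qA Q" "qt Q z = v2"
    using assms(1,2) by (auto simp: valid_path_iff ptgt_def zs)
  then have "qs Q z = v1"
    using arrow_into_v2 kronecker_arrows by blast
  moreover have "bs \<noteq> []"
    using assms(1) calculation v1_neq_v2 by (auto simp: valid_path_iff zs)
  ultimately have "qt Q (hd bs) = v1" "qs Q (last bs) = v2"
    using assms(1) by (auto simp: zs valid_path_iff successively_Cons)
  then show ?thesis
    using path_through_v2_to_v1_in_ideal[of v2 "[z]" bs "[]"] assms(1) \<open>bs \<noteq> []\<close>
    by (simp add: zs)
qed

lemma path_from_v1_to_v2_in_ideal: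
  assumes "valid_path Q (v1, zs)" and "ptgt Q (v1, zs) = v2" and "zs \<noteq> [al]" and "zs \<noteq> [be]"
  shows "(path_elem (v1, zs) :: ('v,'a,'k::comm_ring_1) kq) \<in> kq_ideal Q rels"
proof -
  obtain z zs' where zs: "zs = z # zs'"
    using assms(2) v1_neq_v2 by (cases zs) (auto simp: ptgt_def)
  have "z \<in> qA Q" "qt Q z = v2"
    using assms(1,2) by (auto simp: valid_path_iff ptgt_def zs)
  then have z: "z = al \<or> z = be"
    using arrow_into_v2 by blast
  then obtain bs y where zs': "zs' = bs @ [y]"
    using assms(3,4) zs by (metis rev_exhaust)
  have "y \<in> qA Q" "qs Q y = v1"
    using assms(1) by (auto simp: valid_path_iff zs zs')
  then have y: "y = al \<or> y = be"
    using arrow_from_v1 by blast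
  have chain: "successively (\<lambda>x y. qs Q x = qt Q y) (z # bs @ [y])"
    using assms(1) by (simp add: valid_path_iff zs zs')
  then have "bs \<noteq> []"
    using z y kronecker_arrows v1_neq_v2 by auto
  then have "qt Q (hd bs) = v1" "qs Q (last bs) = v2"
    using chain z y kronecker_arrows by (auto simp: successively_Cons successively_append_iff)
  then show ?thesis
    using path_through_v2_to_v1_in_ideal[of v1 "[z]" bs "[y]"] assms(1) \<open>bs \<noteq> []\<close>
    by (simp add: zs zs')
qed

abbreviation B where "B \<equiv> kron_obj Q al v1 v2"

lemma kron_obj_simps:
  "length B = 2" "B ! 0 = (v2, qdeg Q al)" "B ! 1 = (v1, 1)" "B ! Suc 0 = (v1, 1)"
  by (simp_all add: kron_obj_def)

definition basis_path :: "nat \<Rightarrow> nat \<Rightarrow> ('v,'a) path \<Rightarrow> bool" where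
  "basis_path k l p \<longleftrightarrow>
     k = 0 \<and> l = 0 \<and> p = (v2, []) \<or> k = 0 \<and> l = 1 \<and> (p = (v1, [al]) \<or> p = (v1, [be])) \<or>
     k = 1 \<and> l = 1 \<and> p = (v1, [])"

lemma path_elem_in_ideal_unless_basis:
  assumes "valid_path Q p" and "k < 2" and "l < 2"
    and "psrc p = fst (B ! l)" and "ptgt Q p = fst (B ! k)" and "\<not> basis_path k l p"
  shows "(path_elem p :: ('v,'a,'k::comm_ring_1) kq) \<in> kq_ideal Q rels"
proof -
  obtain zs where p: "p = (fst (B ! l), zs)"
    using assms(4) by (cases p) (simp add: psrc_def)
  consider "k = 0" "l = 0" | "k = 0" "l = 1" | "k = 1" "l = 0" | "k = 1" "l = 1"
    using assms(2,3) by linarith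
  then show ?thesis
  proof cases
    case 1
    then show ?thesis
      using cycle_at_v2_in_ideal[of zs] assms by (auto simp: p kron_obj_simps basis_path_def)
  next
    case 2
    then show ?thesis
      using path_from_v1_to_v2_in_ideal[of zs] assms by (auto simp: p kron_obj_simps basis_path_def)
  next
    case 3
    then show ?thesis
      using path_from_v2_to_v1_in_ideal[of zs] assms by (auto simp: p kron_obj_simps)
  next
    case 4
    then show ?thesis
      using cycle_at_v1_in_ideal[of zs] assms by (auto simp: p kron_obj_simps basis_path_def)
  qed
qed

lemma kq_hom_off_basis_in_ideal:
  assumes "f \<in> kq_hom Q (fst (B ! l)) (fst (B ! k)) n" and "k < 2" and "l < 2"
  shows "(\<lambda>p. if \<not> basis_path k l p then f p else 0) \<in> kq_ideal Q rels"
proof (rule kq_ideal_restrict[OF kq_hom_finite_support[OF assms(1)]])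
  fix p
  assume "f p \<noteq> 0" and "\<not> basis_path k l p"
  then show "path_elem p \<in> kq_ideal Q rels"
    using kq_hom_support[OF assms(1)] path_elem_in_ideal_unless_basis[OF _ assms(2,3)] by blast
qed

lemma ideal_vanishes_on_kronecker_paths:
  assumes "(f :: ('v,'a,'k::comm_ring_1) kq) \<in> kq_ideal Q rels"
  shows "f (w, []) = 0" "f (w, [al]) = 0" "f (w, [be]) = 0"
  using ideal_vanishes_on_short_paths[OF assms] kronecker_arrows kronecker_vertices_unpinched by auto

end

section \<open>The endomorphism algebra of \<open>B\<close>\<close>

locale kronecker_twisted_complex = acyclic_graded_kronecker Q Ag Lv gam alp alm bep bem Ig al be v1 v2
  for Q :: "('v,'a) gquiver" and Ag Lv gam alp alm bep bem Ig al be v1 v2 +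
  fixes mu :: "'k::field"
  assumes mu_nonzero: "mu \<noteq> 0"
begin

abbreviation dB where "dB \<equiv> kron_diff al be v1 mu"

abbreviation e1 :: "('v,'a,'k) kq" where "e1 \<equiv> path_elem (v1, [])"
abbreviation e2 :: "('v,'a,'k) kq" where "e2 \<equiv> path_elem (v2, [])"
abbreviation pa :: "('v,'a,'k) kq" where "pa \<equiv> path_elem (v1, [al])"
abbreviation pb :: "('v,'a,'k) kq" where "pb \<equiv> path_elem (v1, [be])"
definition twist :: "('v,'a,'k) kq" where "twist = kq_add pa (kq_smult mu pb)"

definition unit_B :: "('v,'a,'k) kq_mat" where
  "unit_B = (\<lambda>k l. if k = 0 \<and> l = 0 then e2 else if k = 1 \<and> l = 1 then e1 else kq_zero)"

definition class_B :: "('v,'a,'k) kq_mat" where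
  "class_B = (\<lambda>k l. if k = 0 \<and> l = 1 then pa else kq_zero)"

definition basis_part :: "('v,'a,'k) kq_mat \<Rightarrow> ('v,'a,'k) kq_mat" where
  "basis_part f = (\<lambda>k l p. if basis_path k l p then f k l p else 0)"

lemma kron_diff_eq: "dB k l = (if k = 0 \<and> l = 1 then twist else kq_zero)"
  by (simp add: kron_diff_def twist_def)

lemma tw_comp_B:
  "tw_comp Q (length B) g f k l p = kq_mult Q (g k 0) (f 0 l) p + kq_mult Q (g k 1) (f 1 l) p"
  by (simp add: kron_obj_simps tw_comp_def numeral_2_eq_2)

lemma tw_d_B:
  "tw_d Q B dB n f k l p = (if k = 0 then kq_mult Q twist (f 1 l) p else 0)
      - (if even n then 1 else -1) * (if l = 1 then kq_mult Q (f k 0) twist p else 0)"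
  unfolding tw_d_def tw_comp_B kron_diff_eq by simp

lemma tw_mor_B_iff:
  "f \<in> tw_mor Q B B n \<longleftrightarrow>
     f 0 0 \<in> kq_hom Q v2 v2 n \<and> f 0 1 \<in> kq_hom Q v1 v2 (n - 1 + qdeg Q al) \<and>
     f 1 0 \<in> kq_hom Q v2 v1 (n - qdeg Q al + 1) \<and> f 1 1 \<in> kq_hom Q v1 v1 n \<and>
     (\<forall>k l. \<not> (k < 2 \<and> l < 2) \<longrightarrow> f k l = kq_zero)"
proof -
  have "(\<forall>k l. k < 2 \<and> l < 2 \<longrightarrow> P k l) \<longleftrightarrow> P 0 0 \<and> P 0 1 \<and> P 1 0 \<and> P 1 1"
    for P :: "nat \<Rightarrow> nat \<Rightarrow> bool"
    by (auto simp: less_2_cases_iff)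
  then show ?thesis
    unfolding tw_mor_def mem_Collect_eq kron_obj_simps(1) by (simp add: kron_obj_simps)
qed

lemma tw_mor_B_basis_coeffs:
  assumes "f \<in> tw_mor Q B B n"
  shows "n \<noteq> 0 \<Longrightarrow> f 0 0 (v2, []) = 0" "n \<noteq> 0 \<Longrightarrow> f 1 1 (v1, []) = 0"
    "n \<noteq> 1 \<Longrightarrow> f 0 1 (v1, [al]) = 0" "n \<noteq> 1 \<Longrightarrow> f 0 1 (v1, [be]) = 0"
proof -
  have "f 0 0 \<in> kq_hom Q v2 v2 n" "f 1 1 \<in> kq_hom Q v1 v1 n"
    and f01: "f 0 1 \<in> kq_hom Q v1 v2 (n - 1 + qdeg Q al)"
    using assms unfolding tw_mor_B_iff by simp_all
  then show "n \<noteq> 0 \<Longrightarrow> f 0 0 (v2, []) = 0" "n \<noteq> 0 \<Longrightarrow> f 1 1 (v1, []) = 0"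
    by (simp_all add: kq_hom_trivial_path_coeff)
  show "n \<noteq> 1 \<Longrightarrow> f 0 1 (v1, [al]) = 0" "n \<noteq> 1 \<Longrightarrow> f 0 1 (v1, [be]) = 0"
    using kq_hom_arrow_coeff[OF f01] qdeg_be by simp_all
qed

lemma basis_part_apply:
  "basis_part f k l p =
     (if k = 0 \<and> l = 0 then f 0 0 (v2, []) * e2 p else 0) +
     (if k = 0 \<and> l = 1 then f 0 1 (v1, [al]) * pa p + f 0 1 (v1, [be]) * pb p else 0) +
     (if k = 1 \<and> l = 1 then f 1 1 (v1, []) * e1 p else 0)"
  using al_neq_be by (auto simp: basis_part_def basis_path_def path_elem_def)

lemma mat_equiv_basis_part:
  assumes "f \<in> tw_mor Q B B n"
  shows "mat_equiv Q rels f (basis_part f)"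
  unfolding mat_equiv_def
proof (intro allI)
  fix k l
  show "kq_diff (f k l) (basis_part f k l) \<in> kq_ideal Q rels"
  proof (cases "k < 2 \<and> l < 2")
    case True
    then have "f k l \<in> kq_hom Q (fst (B ! l)) (fst (B ! k)) (n - snd (B ! l) + snd (B ! k))"
      using assms by (simp add: tw_mor_def kron_obj_simps(1))
    from kq_hom_off_basis_in_ideal[OF this] True
    have "(\<lambda>p. if \<not> basis_path k l p then f k l p else 0) \<in> kq_ideal Q rels"
      by simp
    then show ?thesis
      by (rule kq_ideal_cong) (simp add: kq_diff_def basis_part_def)
  next
    case False
    then show ?thesis
      using assms by (intro kq_ideal_vanishing)
        (simp add: tw_mor_def kq_diff_def basis_part_def kron_obj_simps(1))
  qed
qed

lemma twist_apply: "twist (w, []) = 0" "twist (v1, [al]) = 1" "twist (v1, [be]) = mu"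
  using al_neq_be by (auto simp: twist_def kq_add_def kq_smult_def path_elem_def)

lemma twist_mult_e1: "kq_mult Q twist e1 = twist"
  by (simp add: twist_def kq_mult_add_left kq_mult_smult_left path_elem_mult ptgt_def)

lemma e2_mult_twist: "kq_mult Q e2 twist = twist"
  using kronecker_arrows
  by (simp add: twist_def kq_mult_add_right kq_mult_smult_right path_elem_mult ptgt_def)

lemma tw_d_B_at_kronecker_arrows:
  "tw_d Q B dB 0 g 0 1 (v1, [al]) = g 1 1 (v1, []) - g 0 0 (v2, [])"
  "tw_d Q B dB 0 g 0 1 (v1, [be]) = mu * (g 1 1 (v1, []) - g 0 0 (v2, []))"
  using kronecker_arrows by (simp_all add: tw_d_B kq_mult_singleton twist_apply algebra_simps)

lemma idempotents_hom: "e1 \<in> kq_hom Q v1 v1 0" "e2 \<in> kq_hom Q v2 v2 0"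
  using kronecker_vertices by (auto intro!: path_elem_hom simp: valid_path_iff psrc_def ptgt_def pdeg_def)

lemma unit_B_cocycle: "tw_cocycle Q rels B dB 0 unit_B"
  unfolding tw_cocycle_def mat_equiv_def
proof (intro conjI allI kq_ideal_vanishing)
  show "unit_B \<in> tw_mor Q B B 0"
    unfolding tw_mor_B_iff by (simp add: unit_B_def idempotents_hom kq_zero_hom)
  show "kq_diff (tw_d Q B dB 0 unit_B k l) (mat_zero k l) p = 0" for k l p
    by (simp add: kq_diff_def mat_zero_def tw_d_B unit_B_def twist_mult_e1 e2_mult_twist)
qed

lemma class_B_cocycle: "tw_cocycle Q rels B dB 1 class_B"
  unfolding tw_cocycle_def mat_equiv_def
proof (intro conjI allI kq_ideal_vanishing)
  have "pa \<in> kq_hom Q v1 v2 (qdeg Q al)"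
    using kronecker_arrows kronecker_vertices arrows_eq
    by (intro path_elem_hom) (auto simp: valid_path_iff psrc_def ptgt_def pdeg_def)
  then show "class_B \<in> tw_mor Q B B 1"
    unfolding tw_mor_B_iff by (simp add: class_B_def kq_zero_hom)
  show "kq_diff (tw_d Q B dB 1 class_B k l) (mat_zero k l) p = 0" for k l p
    by (simp add: kq_diff_def mat_zero_def tw_d_B class_B_def)
qed

lemma unit_B_mult_unit_B: "tw_comp Q (length B) unit_B unit_B = unit_B"
  by (intro ext) (simp add: tw_comp_B unit_B_def path_elem_mult ptgt_def)

lemma unit_B_mult_class_B: "tw_comp Q (length B) unit_B class_B = class_B"
  using kronecker_arrows by (intro ext) (simp add: tw_comp_B unit_B_def class_B_def path_elem_mult ptgt_def)

lemma class_B_mult_unit_B: "tw_comp Q (length B) class_B unit_B = class_B"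
  by (intro ext) (simp add: tw_comp_B unit_B_def class_B_def path_elem_mult ptgt_def)

lemma class_B_mult_class_B: "tw_comp Q (length B) class_B class_B = mat_zero"
  by (intro ext) (simp add: tw_comp_B class_B_def mat_zero_def)

lemma H0_spanned_by_unit_B:
  assumes "tw_cocycle Q rels B dB 0 f"
  shows "tw_cohomologous Q rels B dB 0 f (mat_smult (f 0 0 (v2, [])) unit_B)"
proof -
  have mor: "f \<in> tw_mor Q B B 0" and closed: "mat_equiv Q rels (tw_d Q B dB 0 f) mat_zero"
    using assms by (simp_all add: tw_cocycle_def)
  have "kq_diff (tw_d Q B dB 0 f 0 1) (mat_zero 0 1) (v1, [al]) = 0"
    using closed unfolding mat_equiv_def by (blast intro: ideal_vanishes_on_kronecker_paths)
  then have "f 1 1 (v1, []) = f 0 0 (v2, [])"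
    using tw_d_B_at_kronecker_arrows(1)[of f] by (simp add: kq_diff_def mat_zero_def)
  then have "basis_part f = mat_smult (f 0 0 (v2, [])) unit_B"
    using tw_mor_B_basis_coeffs[OF mor]
    by (intro ext) (simp add: basis_part_apply mat_smult_def kq_smult_def unit_B_def)
  then show ?thesis
    using tw_cohomologous_mat_equiv_trans[OF mat_equiv_basis_part[OF mor] tw_cohomologous_refl]
    by simp
qed

lemma H1_spanned_by_class_B:
  assumes "f \<in> tw_mor Q B B 1"
  obtains c where "tw_cohomologous Q rels B dB 1 f (mat_smult c class_B)"
proof -
  \<comment> \<open>\<open>d e\<^sub>2 = -(\<alpha> + \<mu>\<beta>)\<close>, so \<open>\<beta>\<close> is cohomologous to \<open>-\<alpha>/\<mu>\<close>\<close>
  define t where "t = - f 0 1 (v1, [be]) / mu"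
  define c where "c = f 0 1 (v1, [al]) + t"
  define g :: "('v,'a,'k) kq_mat"
    where "g = (\<lambda>k l. if k = 0 \<and> l = 0 then kq_smult t e2 else kq_zero)"
  have g_mor: "g \<in> tw_mor Q B B (1 - 1)"
    unfolding tw_mor_B_iff by (simp add: g_def kq_zero_hom kq_smult_hom idempotents_hom)
  have dg: "tw_d Q B dB 0 g k l p = (if k = 0 \<and> l = 1 then - t * twist p else 0)" for k l p
    by (cases "k = 0") (simp_all add: tw_d_B g_def kq_mult_smult_left e2_mult_twist kq_smult_apply)
  have "basis_part f k l p - mat_smult c class_B k l p = tw_d Q B dB (1 - 1) g k l p" for k l p
    using tw_mor_B_basis_coeffs[OF assms] mu_nonzero
    by (simp add: dg basis_part_apply mat_smult_def kq_smult_def class_B_def c_def t_def twist_def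
        kq_add_def field_simps)
  with g_mor have "tw_cohomologous Q rels B dB 1 (basis_part f) (mat_smult c class_B)"
    by (rule tw_cohomologous_exact)
  then show ?thesis
    using that tw_cohomologous_mat_equiv_trans[OF mat_equiv_basis_part[OF assms]] by blast
qed

lemma H_vanishes_outside_degrees_0_1:
  assumes "f \<in> tw_mor Q B B n" and "n \<noteq> 0" and "n \<noteq> 1"
  shows "tw_cohomologous Q rels B dB n f mat_zero"
proof -
  have "basis_part f = mat_zero"
    using tw_mor_B_basis_coeffs[OF assms(1)] assms(2,3)
    by (intro ext) (simp add: basis_part_apply mat_zero_def)
  then show ?thesis
    using tw_cohomologous_mat_equiv_trans[OF mat_equiv_basis_part[OF assms(1)] tw_cohomologous_refl]
    by simp
qed

lemma unit_B_not_exact: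
  assumes "tw_cohomologous Q rels B dB 0 (mat_smult c unit_B) mat_zero"
  shows "c = 0"
proof -
  obtain g where "mat_equiv Q rels (\<lambda>k l. kq_diff (mat_smult c unit_B k l) (mat_zero k l))
      (tw_d Q B dB (0 - 1) g)"
    using assms unfolding tw_cohomologous_def by blast
  then have "kq_diff (kq_diff (mat_smult c unit_B 0 0) (mat_zero 0 0))
      (tw_d Q B dB (0 - 1) g 0 0) (v2, []) = 0"
    unfolding mat_equiv_def by (blast intro: ideal_vanishes_on_kronecker_paths)
  then show "c = 0"
    by (simp add: kq_diff_def mat_smult_def unit_B_def kq_smult_def tw_d_B kq_mult_Nil twist_apply
        mat_zero_def) (simp add: path_elem_def)
qed

lemma class_B_not_exact:
  assumes "tw_cohomologous Q rels B dB 1 (mat_smult c class_B) mat_zero"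
  shows "c = 0"
proof -
  obtain g where "mat_equiv Q rels (\<lambda>k l. kq_diff (mat_smult c class_B k l) (mat_zero k l))
      (tw_d Q B dB (1 - 1) g)"
    using assms unfolding tw_cohomologous_def by blast
  then have "kq_diff (kq_diff (mat_smult c class_B 0 1) (mat_zero 0 1))
      (tw_d Q B dB 0 g 0 1) (v1, [z]) = 0"
    if "z = al \<or> z = be" for z
    using that unfolding mat_equiv_def by (auto intro: ideal_vanishes_on_kronecker_paths)
  from this[of al] this[of be] have "c = g 1 1 (v1, []) - g 0 0 (v2, [])"
    and "mu * (g 1 1 (v1, []) - g 0 0 (v2, [])) = 0"
    using al_neq_be tw_d_B_at_kronecker_arrows[of g]
    by (simp_all add: kq_diff_def mat_smult_def class_B_def kq_smult_def path_elem_def mat_zero_def)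
  then show "c = 0"
    using mu_nonzero by simp
qed

lemma H_End_B_iso_dual_numbers: "H_End_iso_dual_numbers Q rels B dB"
  unfolding H_End_iso_dual_numbers_def graded_iso_dual_numbers_def
proof (rule exI[of _ unit_B], rule exI[of _ class_B], intro conjI allI impI)
  show "tw_cohomologous Q rels B dB 0 (tw_comp Q (length B) unit_B unit_B) unit_B"
    "tw_cohomologous Q rels B dB 1 (tw_comp Q (length B) unit_B class_B) class_B"
    "tw_cohomologous Q rels B dB 1 (tw_comp Q (length B) class_B unit_B) class_B"
    "tw_cohomologous Q rels B dB 2 (tw_comp Q (length B) class_B class_B) mat_zero"
    by (simp_all add: unit_B_mult_unit_B unit_B_mult_class_B class_B_mult_unit_B
        class_B_mult_class_B tw_cohomologous_refl)
  show "\<exists>c. tw_cohomologous Q rels B dB 0 f (mat_smult c unit_B)" if "tw_cocycle Q rels B dB 0 f" for f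
    using H0_spanned_by_unit_B[OF that] by blast
  show "\<exists>c. tw_cohomologous Q rels B dB 1 f (mat_smult c class_B)" if "tw_cocycle Q rels B dB 1 f" for f
    using H1_spanned_by_class_B that unfolding tw_cocycle_def by metis
  show "tw_cohomologous Q rels B dB n f mat_zero" if "n \<noteq> 0 \<and> n \<noteq> 1 \<and> tw_cocycle Q rels B dB n f"
    for n f
    using H_vanishes_outside_degrees_0_1 that unfolding tw_cocycle_def by blast
qed (simp_all add: unit_B_cocycle class_B_cocycle unit_B_not_exact class_B_not_exact)

end

theorem lemma5p4:
  fixes Q :: "('v,'a) gquiver"
    and Ag :: "'a set" and Lv :: "'v set"
    and gam alp alm bep bem :: "'v \<Rightarrow> 'a"
    and Ig :: "('a \<times> 'a) set"
    and al be :: 'a and v1 v2 :: 'v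
    and mu :: "'k::field"
  assumes "graded_pinched_gentle Q Ag Lv gam alp alm bep bem Ig"
    and "graded_kronecker Q Ag Lv al be v1 v2"
    and "acyclic_kronecker Q Ag Ig al be"
    and "mu \<noteq> 0"
  shows "H_End_iso_dual_numbers Q (pg_rels Q Lv gam alp alm bep bem Ig)
           (kron_obj Q al v1 v2) (kron_diff al be v1 mu)"
proof -
  interpret kronecker_twisted_complex Q Ag Lv gam alp alm bep bem Ig al be v1 v2 mu
    by unfold_locales (fact assms)+
  show ?thesis
    by (rule H_End_B_iso_dual_numbers)
qed

end
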